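(* Let $(P,\epsilon)$ be a labeled poset and let $n$ be a non-negative integer such that $\Omega(P,\epsilon;n)\ne0$. If $\Omega(P,-\epsilon;n+r(\epsilon))=\Omega(P,\epsilon;n)$, then $\epsilon$ satisfies the $\lambda$-chain condition.
   Context: $P$ is a finite poset with $p$ elements, $\omega:P\to\{1,\dots,p\}$ a bijection; write $x\prec y$ if $y$ covers $x$, and $\epsilon(x,y)=1$ if $\omega(x)<\omega(y)$, $-1$ otherwise; $-\epsilon$ is defined by $(-\epsilon)(x,y)=-\epsilon(x,y)$ (induced by the labeling $p+1-\omega$). A $(P,\epsilon)$-partition is an order-reversing map $\sigma:P\to\{1,2,\dots\}$ with $\sigma(x)>\sigma(y)$ whenever $x\prec y$ and $\epsilon(x,y)=-1$; $\Omega(P,\epsilon;n)$ is the number of $(P,\epsilon)$-partitions with largest part at most $n$. $r(\epsilon)=\max\sum_{i=1}^\ell\epsilon(x_{i-1},x_i)$ over all maximal chains $x_0\prec\cdots\prec x_\ell$ of $P$. $\epsilon$ satisfies the $\lambda$-chain condition if every $x\in P$ lies on some maximal chain $x_0\prec\cdots\prec x_\ell$ with $\sum_{i=1}^\ell\epsilon(x_{i-1},x_i)=r(\epsilon)$. *)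

theory Defs
  imports Main "HOL-Library.FuncSet"
begin

text \<open>A finite poset is a carrier P with an order relation R (pairs (x,y) meaning x \<le> y),
  satisfying partial_order_on P R. A labeling is a bijection omega : P \<rightarrow> {1..card P}.\<close>

definition covers :: "'a set \<Rightarrow> ('a \<times> 'a) set \<Rightarrow> 'a \<Rightarrow> 'a \<Rightarrow> bool" where
  "covers P R x y \<longleftrightarrow> x \<in> P \<and> y \<in> P \<and> (x, y) \<in> R \<and> x \<noteq> y \<and>
     \<not> (\<exists>z\<in>P. (x, z) \<in> R \<and> (z, y) \<in> R \<and> z \<noteq> x \<and> z \<noteq> y)"

definition eps_of :: "('a \<Rightarrow> nat) \<Rightarrow> 'a \<Rightarrow> 'a \<Rightarrow> int" where
  "eps_of \<omega> x y = (if \<omega> x < \<omega> y then 1 else -1)"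

definition PE_partitions :: "'a set \<Rightarrow> ('a \<times> 'a) set \<Rightarrow> ('a \<Rightarrow> 'a \<Rightarrow> int) \<Rightarrow> int \<Rightarrow> ('a \<Rightarrow> int) set" where
  "PE_partitions P R e n = {\<sigma> \<in> P \<rightarrow>\<^sub>E {1..n}.
      (\<forall>x\<in>P. \<forall>y\<in>P. (x, y) \<in> R \<longrightarrow> \<sigma> y \<le> \<sigma> x) \<and>
      (\<forall>x y. covers P R x y \<and> e x y = -1 \<longrightarrow> \<sigma> y < \<sigma> x)}"

definition Omega :: "'a set \<Rightarrow> ('a \<times> 'a) set \<Rightarrow> ('a \<Rightarrow> 'a \<Rightarrow> int) \<Rightarrow> int \<Rightarrow> nat" where
  "Omega P R e n = card (PE_partitions P R e n)"

definition maximal_chain :: "'a set \<Rightarrow> ('a \<times> 'a) set \<Rightarrow> 'a list \<Rightarrow> bool" where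
  "maximal_chain P R xs \<longleftrightarrow> xs \<noteq> [] \<and>
     (\<forall>i. Suc i < length xs \<longrightarrow> covers P R (xs ! i) (xs ! Suc i)) \<and>
     hd xs \<in> P \<and> last xs \<in> P \<and>
     \<not> (\<exists>z\<in>P. (z, hd xs) \<in> R \<and> z \<noteq> hd xs) \<and>
     \<not> (\<exists>z\<in>P. (last xs, z) \<in> R \<and> z \<noteq> last xs)"

definition chain_sum :: "('a \<Rightarrow> 'a \<Rightarrow> int) \<Rightarrow> 'a list \<Rightarrow> int" where
  "chain_sum e xs = (\<Sum>i<length xs - 1. e (xs ! i) (xs ! Suc i))"

definition r_of :: "'a set \<Rightarrow> ('a \<times> 'a) set \<Rightarrow> ('a \<Rightarrow> 'a \<Rightarrow> int) \<Rightarrow> int" where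
  "r_of P R e = Max {chain_sum e xs | xs. maximal_chain P R xs}"

definition lambda_chain_condition :: "'a set \<Rightarrow> ('a \<times> 'a) set \<Rightarrow> ('a \<Rightarrow> 'a \<Rightarrow> int) \<Rightarrow> bool" where
  "lambda_chain_condition P R e \<longleftrightarrow>
     (\<forall>x\<in>P. \<exists>xs. maximal_chain P R xs \<and> x \<in> set xs \<and> chain_sum e xs = r_of P R e)"

end

theory Submission
  imports Defs
begin

text \<open>
  Let \<open>\<beta>(x)\<close> be the largest \<open>\<epsilon>\<close>-weight of a saturated chain from \<open>x\<close> up to a
  maximal element. Adding \<open>\<beta>\<close> to a \<open>(P,\<epsilon>)\<close>-partition with parts at most \<open>n\<close> yields a
  \<open>(P,-\<epsilon>)\<close>-partition with parts at most \<open>n + r(\<epsilon>)\<close>, and this map is injective; the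
  hypothesis \<open>\<Omega>(P,-\<epsilon>;n+r(\<epsilon>)) = \<Omega>(P,\<epsilon>;n)\<close> makes it a bijection.
  Let \<open>\<alpha>(x)\<close> be the largest number of ascents (\<open>\<epsilon> = 1\<close>) of a saturated chain from a
  minimal element to \<open>x\<close>. If \<open>x\<close> lies on no maximal chain of weight \<open>r(\<epsilon>)\<close>, every image
  \<open>\<tau>\<close> satisfies \<open>\<tau>(x) + \<alpha>(x) < n + r(\<epsilon>)\<close>. But \<open>max(\<tau>, n + r(\<epsilon>) - \<alpha>)\<close> is again a
  \<open>(P,-\<epsilon>)\<close>-partition with parts at most \<open>n + r(\<epsilon>)\<close>, and it violates this bound at \<open>x\<close>.
\<close>

section \<open>Saturated chains\<close>

lemma successively_iff_nth:
  "successively P xs \<longleftrightarrow> (\<forall>i. Suc i < length xs \<longrightarrow> P (xs ! i) (xs ! Suc i))"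
proof (induction P xs rule: successively.induct)
  case (3 P x y xs)
  then show ?case
    by (auto simp: less_Suc_eq_0_disj)
qed auto

lemma last_append_tl:
  "xs \<noteq> [] \<Longrightarrow> ys \<noteq> [] \<Longrightarrow> last xs = hd ys \<Longrightarrow> last (xs @ tl ys) = last ys"
  by (cases ys) auto

lemma chain_sum_simps [simp]:
  "chain_sum w [] = 0"
  "chain_sum w [x] = 0"
  "chain_sum w (x # y # zs) = w x y + chain_sum w (y # zs)"
  by (simp_all add: chain_sum_def sum.lessThan_Suc_shift del: sum.lessThan_Suc)

lemma chain_sum_append_tl:
  "xs \<noteq> [] \<Longrightarrow> ys \<noteq> [] \<Longrightarrow> last xs = hd ys \<Longrightarrow>
    chain_sum w (xs @ tl ys) = chain_sum w xs + chain_sum w ys"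
  by (induction xs rule: induct_list012) (auto simp: neq_Nil_conv)

lemma chain_sum_nonneg: "(\<And>x y. 0 \<le> w x y) \<Longrightarrow> 0 \<le> chain_sum w xs"
  unfolding chain_sum_def by (simp add: sum_nonneg)

definition cover_path :: "'a set \<Rightarrow> ('a \<times> 'a) set \<Rightarrow> 'a list \<Rightarrow> bool" where
  "cover_path P R xs \<longleftrightarrow> xs \<noteq> [] \<and> hd xs \<in> P \<and> successively (covers P R) xs"

lemma cover_path_simps [simp]:
  "\<not> cover_path P R []"
  "cover_path P R [x] \<longleftrightarrow> x \<in> P"
  "cover_path P R (x # y # zs) \<longleftrightarrow> covers P R x y \<and> cover_path P R (y # zs)"
  by (auto simp: cover_path_def covers_def)

lemma cover_path_subset: "cover_path P R xs \<Longrightarrow> set xs \<subseteq> P"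
  by (induction xs rule: induct_list012) (auto simp: covers_def)

lemma cover_path_append_tl:
  assumes "cover_path P R xs" "cover_path P R ys" "last xs = hd ys"
  shows "cover_path P R (xs @ tl ys)"
  using assms by (cases ys) (auto simp: cover_path_def successively_append_iff successively_Cons)

definition minimal_in :: "'a set \<Rightarrow> ('a \<times> 'a) set \<Rightarrow> 'a \<Rightarrow> bool" where
  "minimal_in P R x \<longleftrightarrow> x \<in> P \<and> (\<forall>z\<in>P. (z, x) \<in> R \<longrightarrow> z = x)"

definition maximal_in :: "'a set \<Rightarrow> ('a \<times> 'a) set \<Rightarrow> 'a \<Rightarrow> bool" where
  "maximal_in P R x \<longleftrightarrow> x \<in> P \<and> (\<forall>z\<in>P. (x, z) \<in> R \<longrightarrow> z = x)"

lemma maximal_chain_iff: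
  "maximal_chain P R xs \<longleftrightarrow>
    cover_path P R xs \<and> minimal_in P R (hd xs) \<and> maximal_in P R (last xs)"
  unfolding maximal_chain_def cover_path_def minimal_in_def maximal_in_def successively_iff_nth
  by blast

section \<open>Extremal chain weights in a finite poset\<close>

locale finite_poset =
  fixes P :: "'a set" and R :: "('a \<times> 'a) set"
  assumes finite_carrier: "finite P" and partial_order: "partial_order_on P R"
begin

lemma R_subset: "R \<subseteq> P \<times> P"
  using partial_order_onD(4)[OF partial_order] .

lemma R_refl: "x \<in> P \<Longrightarrow> (x, x) \<in> R"
  using partial_order_onD(1)[OF partial_order] by (simp add: refl_on_def)

lemma R_trans: "(x, y) \<in> R \<Longrightarrow> (y, z) \<in> R \<Longrightarrow> (x, z) \<in> R"
  using partial_order_onD(2)[OF partial_order] by (rule transD)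

lemma R_antisym: "(x, y) \<in> R \<Longrightarrow> (y, x) \<in> R \<Longrightarrow> x = y"
  using partial_order_onD(3)[OF partial_order] by (rule antisymD)

lemma finite_R: "finite R"
  by (rule finite_subset[OF R_subset]) (simp add: finite_carrier)

lemma wf_strict: "wf (R - Id)"
  using finite_R partial_order by (rule partial_order_on_well_order_on)

lemma wf_strict_converse: "wf (R\<inverse> - Id)"
  using finite_R partial_order by (intro partial_order_on_well_order_on) auto

lemma ex_minimal:
  assumes "x \<in> S"
  obtains m where "m \<in> S" "\<And>t. t \<in> S \<Longrightarrow> (t, m) \<in> R \<Longrightarrow> t = m"
proof (rule wfE_min[OF wf_strict assms])
  fix m assume "m \<in> S" "\<And>t. (t, m) \<in> R - Id \<Longrightarrow> t \<notin> S"
  then show thesis using that by blast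
qed

lemma ex_maximal:
  assumes "x \<in> S"
  obtains m where "m \<in> S" "\<And>t. t \<in> S \<Longrightarrow> (m, t) \<in> R \<Longrightarrow> t = m"
proof (rule wfE_min[OF wf_strict_converse assms])
  fix m assume "m \<in> S" "\<And>t. (t, m) \<in> R\<inverse> - Id \<Longrightarrow> t \<notin> S"
  then show thesis using that by blast
qed

lemma minimal_below:
  assumes "x \<in> P"
  obtains m where "minimal_in P R m" "(m, x) \<in> R"
proof -
  obtain m where m: "(m, x) \<in> R" and least: "\<And>t. (t, x) \<in> R \<Longrightarrow> (t, m) \<in> R \<Longrightarrow> t = m"
    using ex_minimal[of x "{m. (m, x) \<in> R}"] R_refl[OF assms] by auto
  have "m \<in> P" using m R_subset by auto
  then have "minimal_in P R m" unfolding minimal_in_def using least R_trans[OF _ m] by blast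
  with m that show thesis by blast
qed

lemma maximal_above:
  assumes "x \<in> P"
  obtains m where "maximal_in P R m" "(x, m) \<in> R"
proof -
  obtain m where m: "(x, m) \<in> R" and greatest: "\<And>t. (x, t) \<in> R \<Longrightarrow> (m, t) \<in> R \<Longrightarrow> t = m"
    using ex_maximal[of x "{m. (x, m) \<in> R}"] R_refl[OF assms] by auto
  have "m \<in> P" using m R_subset by auto
  then have "maximal_in P R m" unfolding maximal_in_def using greatest R_trans[OF m] by blast
  with m that show thesis by blast
qed

lemma cover_path_between:
  "(y, z) \<in> R \<Longrightarrow> \<exists>xs. cover_path P R xs \<and> hd xs = y \<and> last xs = z"
  using wf_strict_converse
proof (induction y rule: wf_induct_rule)
  case (less y)
  show ?case
  proof (cases "y = z")
    case True
    with less.prems R_subset show ?thesis by (intro exI[of _ "[y]"]) auto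
  next
    case False
    let ?between = "{w. (y, w) \<in> R \<and> w \<noteq> y \<and> (w, z) \<in> R}"
    obtain w where w: "w \<in> ?between"
      and least: "\<And>t. t \<in> ?between \<Longrightarrow> (t, w) \<in> R \<Longrightarrow> t = w"
      using ex_minimal[of z ?between] False less.prems R_subset R_refl by blast
    have "covers P R y w"
      unfolding covers_def
    proof (intro conjI)
      show "y \<in> P" "w \<in> P" using w R_subset by auto
      show "(y, w) \<in> R" "y \<noteq> w" using w by auto
      show "\<not> (\<exists>t\<in>P. (y, t) \<in> R \<and> (t, w) \<in> R \<and> t \<noteq> y \<and> t \<noteq> w)"
      proof
        assume "\<exists>t\<in>P. (y, t) \<in> R \<and> (t, w) \<in> R \<and> t \<noteq> y \<and> t \<noteq> w"
        then obtain t where "(y, t) \<in> R" "(t, w) \<in> R" "t \<noteq> y" "t \<noteq> w" by blast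
        moreover have "(t, z) \<in> R" using R_trans \<open>(t, w) \<in> R\<close> w by blast
        ultimately show False using least by blast
      qed
    qed
    moreover obtain xs where "cover_path P R xs" "hd xs = w" "last xs = z"
      using less.IH[of w] w by blast
    ultimately show ?thesis
      by (intro exI[of _ "y # xs"]) (cases xs; auto)
  qed
qed

lemma cover_path_hd_less:
  "cover_path P R xs \<Longrightarrow> z \<in> set (tl xs) \<Longrightarrow> (hd xs, z) \<in> R \<and> hd xs \<noteq> z"
proof (induction xs arbitrary: z rule: induct_list012)
  case (3 x y zs)
  then show ?case
    using R_trans R_antisym by (cases "z = y") (auto simp: covers_def)
qed auto

lemma cover_path_distinct: "cover_path P R xs \<Longrightarrow> distinct xs"
proof (induction xs rule: induct_list012)
  case (3 x y zs)
  then show ?case using cover_path_hd_less[OF "3.prems"] by fastforce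
qed auto

lemma finite_cover_paths: "finite {xs. cover_path P R xs}"
proof (rule finite_subset)
  have "set xs \<subseteq> P \<and> length xs \<le> card P" if "cover_path P R xs" for xs
    using cover_path_subset[OF that] distinct_card[OF cover_path_distinct[OF that]]
      card_mono[OF finite_carrier] by metis
  then show "{xs. cover_path P R xs} \<subseteq> {xs. set xs \<subseteq> P \<and> length xs \<le> card P}"
    by blast
  show "finite {xs. set xs \<subseteq> P \<and> length xs \<le> card P}"
    using finite_carrier by (rule finite_lists_length_le)
qed

definition paths_to_max :: "'a \<Rightarrow> 'a list set" where
  "paths_to_max x = {xs. cover_path P R xs \<and> hd xs = x \<and> maximal_in P R (last xs)}"

definition paths_from_min :: "'a \<Rightarrow> 'a list set" where
  "paths_from_min x = {xs. cover_path P R xs \<and> minimal_in P R (hd xs) \<and> last xs = x}"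

lemma finite_paths_to_max: "finite (paths_to_max x)"
  unfolding paths_to_max_def by (rule finite_subset[OF _ finite_cover_paths]) blast

lemma finite_paths_from_min: "finite (paths_from_min x)"
  unfolding paths_from_min_def by (rule finite_subset[OF _ finite_cover_paths]) blast

lemma paths_to_max_nonempty:
  assumes "x \<in> P" shows "paths_to_max x \<noteq> {}"
proof -
  obtain m where "maximal_in P R m" "(x, m) \<in> R" using maximal_above[OF assms] .
  moreover from \<open>(x, m) \<in> R\<close> obtain xs where "cover_path P R xs" "hd xs = x" "last xs = m"
    using cover_path_between by blast
  ultimately show ?thesis unfolding paths_to_max_def by blast
qed

lemma paths_from_min_nonempty:
  assumes "x \<in> P" shows "paths_from_min x \<noteq> {}"
proof -
  obtain m where "minimal_in P R m" "(m, x) \<in> R" using minimal_below[OF assms] .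
  moreover from \<open>(m, x) \<in> R\<close> obtain xs where "cover_path P R xs" "hd xs = m" "last xs = x"
    using cover_path_between by blast
  ultimately show ?thesis unfolding paths_from_min_def by blast
qed

lemma maximal_chain_join:
  assumes "C \<in> paths_from_min x" "D \<in> paths_to_max x"
  shows "maximal_chain P R (C @ tl D)" "x \<in> set (C @ tl D)"
proof -
  have C: "cover_path P R C" "minimal_in P R (hd C)" "last C = x"
    and D: "cover_path P R D" "maximal_in P R (last D)" "hd D = x"
    using assms by (auto simp: paths_from_min_def paths_to_max_def)
  have "C \<noteq> []" "D \<noteq> []" using C(1) D(1) by (auto simp: cover_path_def)
  with C D show "maximal_chain P R (C @ tl D)"
    by (auto simp: maximal_chain_iff last_append_tl intro: cover_path_append_tl)
  show "x \<in> set (C @ tl D)" using C(3) \<open>C \<noteq> []\<close> by auto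
qed

lemma chain_sum_le_r_of: "maximal_chain P R xs \<Longrightarrow> chain_sum w xs \<le> r_of P R w"
proof -
  assume "maximal_chain P R xs"
  moreover have "finite {chain_sum w xs | xs. maximal_chain P R xs}"
    using finite_imageI[OF finite_cover_paths, of "chain_sum w"]
    by (rule finite_subset[rotated]) (auto simp: maximal_chain_iff)
  ultimately show ?thesis unfolding r_of_def by (intro Max_ge) auto
qed

definition weight_above :: "('a \<Rightarrow> 'a \<Rightarrow> int) \<Rightarrow> 'a \<Rightarrow> int" where
  "weight_above w x = Max (chain_sum w ` paths_to_max x)"

definition weight_below :: "('a \<Rightarrow> 'a \<Rightarrow> int) \<Rightarrow> 'a \<Rightarrow> int" where
  "weight_below w x = Max (chain_sum w ` paths_from_min x)"

lemma weight_above_attained: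
  "x \<in> P \<Longrightarrow> \<exists>D\<in>paths_to_max x. chain_sum w D = weight_above w x"
proof -
  assume "x \<in> P"
  then have "weight_above w x \<in> chain_sum w ` paths_to_max x"
    unfolding weight_above_def
    by (intro Max_in finite_imageI finite_paths_to_max) (simp add: paths_to_max_nonempty)
  then show ?thesis by auto
qed

lemma weight_below_attained:
  "x \<in> P \<Longrightarrow> \<exists>C\<in>paths_from_min x. chain_sum w C = weight_below w x"
proof -
  assume "x \<in> P"
  then have "weight_below w x \<in> chain_sum w ` paths_from_min x"
    unfolding weight_below_def
    by (intro Max_in finite_imageI finite_paths_from_min) (simp add: paths_from_min_nonempty)
  then show ?thesis by auto
qed

lemma weight_below_nonneg:
  assumes "\<And>x y. 0 \<le> w x y" "x \<in> P"
  shows "0 \<le> weight_below w x"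
proof -
  obtain C where "chain_sum w C = weight_below w x"
    using weight_below_attained[OF assms(2)] by blast
  with chain_sum_nonneg[of w C] assms(1) show ?thesis by simp
qed

lemma weight_above_path:
  assumes C: "cover_path P R C"
  shows "chain_sum w C + weight_above w (last C) \<le> weight_above w (hd C)"
proof -
  have "C \<noteq> []" using C by (simp add: cover_path_def)
  then have "last C \<in> P" using cover_path_subset[OF C] by auto
  then obtain D where D: "D \<in> paths_to_max (last C)" "chain_sum w D = weight_above w (last C)"
    using weight_above_attained by blast
  then have "cover_path P R D" "hd D = last C" "maximal_in P R (last D)" "D \<noteq> []"
    by (auto simp: paths_to_max_def cover_path_def)
  with C \<open>C \<noteq> []\<close> have "C @ tl D \<in> paths_to_max (hd C)"
    by (auto simp: paths_to_max_def last_append_tl intro: cover_path_append_tl)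
  then have "chain_sum w (C @ tl D) \<le> weight_above w (hd C)"
    unfolding weight_above_def by (intro Max_ge finite_imageI finite_paths_to_max imageI)
  with D \<open>C \<noteq> []\<close> \<open>D \<noteq> []\<close> \<open>hd D = last C\<close> show ?thesis
    by (simp add: chain_sum_append_tl)
qed

lemma weight_below_path:
  assumes C: "cover_path P R C"
  shows "weight_below w (hd C) + chain_sum w C \<le> weight_below w (last C)"
proof -
  have "C \<noteq> []" using C by (simp add: cover_path_def)
  then have "hd C \<in> P" using cover_path_subset[OF C] by auto
  then obtain B where B: "B \<in> paths_from_min (hd C)" "chain_sum w B = weight_below w (hd C)"
    using weight_below_attained by blast
  then have "cover_path P R B" "last B = hd C" "minimal_in P R (hd B)" "B \<noteq> []"
    by (auto simp: paths_from_min_def cover_path_def)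
  with C \<open>C \<noteq> []\<close> have "B @ tl C \<in> paths_from_min (last C)"
    by (auto simp: paths_from_min_def last_append_tl intro: cover_path_append_tl)
  then have "chain_sum w (B @ tl C) \<le> weight_below w (last C)"
    unfolding weight_below_def by (intro Max_ge finite_imageI finite_paths_from_min imageI)
  with B \<open>C \<noteq> []\<close> \<open>B \<noteq> []\<close> \<open>last B = hd C\<close> show ?thesis
    by (simp add: chain_sum_append_tl)
qed

end

section \<open>Shifting \<open>(P,\<epsilon>)\<close>-partitions\<close>

lemma PE_partitions_range:
  "\<sigma> \<in> PE_partitions P R e n \<Longrightarrow> x \<in> P \<Longrightarrow> 1 \<le> \<sigma> x \<and> \<sigma> x \<le> n"
  unfolding PE_partitions_def by auto

lemma finite_PE_partitions:
  assumes "finite P" shows "finite (PE_partitions P R e n)"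
proof (rule finite_subset)
  show "PE_partitions P R e n \<subseteq> P \<rightarrow>\<^sub>E {1..n}" unfolding PE_partitions_def by blast
  show "finite (P \<rightarrow>\<^sub>E {1..n})" using assms by (simp add: finite_PiE)
qed

locale labeled_poset = finite_poset +
  fixes e :: "'a \<Rightarrow> 'a \<Rightarrow> int"
  assumes sign: "e x y = 1 \<or> e x y = -1"
begin

definition ascent :: "'a \<Rightarrow> 'a \<Rightarrow> int" where
  "ascent x y = (if e x y = 1 then 1 else 0)"

lemma ascent_nonneg: "0 \<le> ascent x y"
  by (simp add: ascent_def)

lemma chain_sum_ascent_nonneg: "0 \<le> chain_sum ascent xs"
  using chain_sum_nonneg[of ascent, OF ascent_nonneg] .

lemma PE_partition_path_bound:
  assumes \<sigma>: "\<sigma> \<in> PE_partitions P R e n" and C: "cover_path P R C"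
  shows "\<sigma> (last C) + chain_sum ascent C \<le> \<sigma> (hd C) + chain_sum e C"
  using C
proof (induction C rule: induct_list012)
  case (3 x y zs)
  then have "covers P R x y" and path: "cover_path P R (y # zs)" by simp_all
  then have "\<sigma> y \<le> \<sigma> x" "e x y = -1 \<longrightarrow> \<sigma> y < \<sigma> x"
    using \<sigma> unfolding PE_partitions_def covers_def by auto
  then have "\<sigma> y + ascent x y \<le> \<sigma> x + e x y"
    using sign[of x y] by (auto simp: ascent_def)
  with "3.IH"(2)[OF path] show ?case by simp
qed auto

definition shift :: "('a \<Rightarrow> int) \<Rightarrow> 'a \<Rightarrow> int" where
  "shift \<sigma> = restrict (\<lambda>x. \<sigma> x + weight_above e x) P"

lemma shift_path_bound:
  assumes \<sigma>: "\<sigma> \<in> PE_partitions P R e n" and C: "cover_path P R C"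
  shows "shift \<sigma> (last C) + chain_sum ascent C \<le> shift \<sigma> (hd C)"
proof -
  have "C \<noteq> []" using C by (simp add: cover_path_def)
  then have "hd C \<in> P" "last C \<in> P" using cover_path_subset[OF C] by auto
  with PE_partition_path_bound[OF \<sigma> C] weight_above_path[OF C, of e] show ?thesis
    by (simp add: shift_def)
qed

lemma shift_le_chain:
  assumes \<sigma>: "\<sigma> \<in> PE_partitions P R e n"
    and C: "C \<in> paths_from_min x" and D: "D \<in> paths_to_max x"
    and D_max: "chain_sum e D = weight_above e x"
  shows "shift \<sigma> x + chain_sum ascent C \<le> n + chain_sum e (C @ tl D)"
proof -
  have C': "cover_path P R C" "last C = x" "C \<noteq> []"
    and D': "hd D = x" "D \<noteq> []"
    using C D by (auto simp: paths_from_min_def paths_to_max_def cover_path_def)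
  have "hd C \<in> P" "x \<in> P" using cover_path_subset[OF C'(1)] C' by auto
  then have "\<sigma> (hd C) \<le> n" using PE_partitions_range[OF \<sigma>] by blast
  with PE_partition_path_bound[OF \<sigma> C'(1)] C' D' D_max \<open>x \<in> P\<close> show ?thesis
    by (simp add: shift_def chain_sum_append_tl)
qed

lemma shift_ge_one:
  assumes \<sigma>: "\<sigma> \<in> PE_partitions P R e n" and x: "x \<in> P"
  shows "1 \<le> shift \<sigma> x"
proof -
  obtain D where D: "D \<in> paths_to_max x" "chain_sum e D = weight_above e x"
    using weight_above_attained[OF x] by blast
  then have "cover_path P R D" "hd D = x" "D \<noteq> []"
    by (auto simp: paths_to_max_def cover_path_def)
  then have "last D \<in> P" using cover_path_subset[of P R D] by auto
  then have "1 \<le> \<sigma> (last D)" using PE_partitions_range[OF \<sigma>] by blast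
  with PE_partition_path_bound[OF \<sigma> \<open>cover_path P R D\<close>] chain_sum_ascent_nonneg[of D]
    D \<open>hd D = x\<close> x show ?thesis
    by (simp add: shift_def)
qed

lemma shift_le_r_of:
  assumes \<sigma>: "\<sigma> \<in> PE_partitions P R e n" and x: "x \<in> P"
  shows "shift \<sigma> x \<le> n + r_of P R e"
proof -
  obtain C where C: "C \<in> paths_from_min x"
    using paths_from_min_nonempty[OF x] by blast
  obtain D where D: "D \<in> paths_to_max x" "chain_sum e D = weight_above e x"
    using weight_above_attained[OF x] by blast
  have "chain_sum e (C @ tl D) \<le> r_of P R e"
    using chain_sum_le_r_of maximal_chain_join(1)[OF C D(1)] by blast
  with shift_le_chain[OF \<sigma> C D] chain_sum_ascent_nonneg[of C] show ?thesis
    by linarith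
qed

lemma shift_in_PE_partitions:
  assumes \<sigma>: "\<sigma> \<in> PE_partitions P R e n"
  shows "shift \<sigma> \<in> PE_partitions P R (\<lambda>x y. - e x y) (n + r_of P R e)"
  unfolding PE_partitions_def
proof (intro CollectI conjI ballI allI impI)
  show "shift \<sigma> \<in> P \<rightarrow>\<^sub>E {1..n + r_of P R e}"
    using shift_ge_one[OF \<sigma>] shift_le_r_of[OF \<sigma>] by (auto simp: shift_def)
next
  fix x y assume "x \<in> P" "y \<in> P" "(x, y) \<in> R"
  then obtain C where "cover_path P R C" "hd C = x" "last C = y"
    using cover_path_between by blast
  with shift_path_bound[OF \<sigma>] chain_sum_ascent_nonneg[of C]
  show "shift \<sigma> y \<le> shift \<sigma> x" by fastforce
next
  fix x y assume "covers P R x y \<and> - e x y = -1"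
  then have "cover_path P R [x, y]" "ascent x y = 1"
    by (auto simp: covers_def ascent_def)
  with shift_path_bound[OF \<sigma>, of "[x, y]"] show "shift \<sigma> y < shift \<sigma> x" by simp
qed

lemma inj_on_shift: "inj_on shift (PE_partitions P R e n)"
proof (rule inj_onI)
  fix \<sigma>1 \<sigma>2
  assume "\<sigma>1 \<in> PE_partitions P R e n" "\<sigma>2 \<in> PE_partitions P R e n" and eq: "shift \<sigma>1 = shift \<sigma>2"
  then have "\<sigma>1 \<in> extensional P" "\<sigma>2 \<in> extensional P"
    unfolding PE_partitions_def by (auto simp: PiE_iff)
  then show "\<sigma>1 = \<sigma>2"
  proof (rule extensionalityI)
    fix x assume "x \<in> P"
    with fun_cong[OF eq, of x] show "\<sigma>1 x = \<sigma>2 x" by (simp add: shift_def)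
  qed
qed

definition raise :: "int \<Rightarrow> ('a \<Rightarrow> int) \<Rightarrow> 'a \<Rightarrow> int" where
  "raise m \<tau> = restrict (\<lambda>x. max (\<tau> x) (m - weight_below ascent x)) P"

lemma raise_in_PE_partitions:
  assumes \<tau>: "\<tau> \<in> PE_partitions P R (\<lambda>x y. - e x y) m"
  shows "raise m \<tau> \<in> PE_partitions P R (\<lambda>x y. - e x y) m"
  unfolding PE_partitions_def
proof (intro CollectI conjI ballI allI impI)
  show "raise m \<tau> \<in> P \<rightarrow>\<^sub>E {1..m}"
    using PE_partitions_range[OF \<tau>] weight_below_nonneg[of ascent, OF ascent_nonneg]
    by (auto simp: raise_def le_max_iff_disj)
next
  fix x y assume xy: "x \<in> P" "y \<in> P" "(x, y) \<in> R"
  then obtain C where "cover_path P R C" "hd C = x" "last C = y"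
    using cover_path_between by blast
  with weight_below_path[of C ascent] chain_sum_ascent_nonneg[of C]
  have "weight_below ascent x \<le> weight_below ascent y" by fastforce
  moreover have "\<tau> y \<le> \<tau> x" using \<tau> xy unfolding PE_partitions_def by blast
  ultimately show "raise m \<tau> y \<le> raise m \<tau> x" using xy by (simp add: raise_def max_def)
next
  fix x y assume xy: "covers P R x y \<and> - e x y = -1"
  then have "cover_path P R [x, y]" "ascent x y = 1" "x \<in> P" "y \<in> P"
    by (auto simp: covers_def ascent_def)
  with weight_below_path[of "[x, y]" ascent]
  have "weight_below ascent x < weight_below ascent y" by simp
  moreover have "\<tau> y < \<tau> x" using \<tau> xy unfolding PE_partitions_def by blast
  ultimately show "raise m \<tau> y < raise m \<tau> x"
    using \<open>x \<in> P\<close> \<open>y \<in> P\<close> by (simp add: raise_def max_def)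
qed

lemma shift_image_eq:
  assumes "Omega P R (\<lambda>x y. - e x y) (n + r_of P R e) = Omega P R e n"
  shows "shift ` PE_partitions P R e n = PE_partitions P R (\<lambda>x y. - e x y) (n + r_of P R e)"
proof (rule card_subset_eq)
  show "finite (PE_partitions P R (\<lambda>x y. - e x y) (n + r_of P R e))"
    using finite_carrier by (rule finite_PE_partitions)
  show "shift ` PE_partitions P R e n \<subseteq> PE_partitions P R (\<lambda>x y. - e x y) (n + r_of P R e)"
    using shift_in_PE_partitions by blast
  show "card (shift ` PE_partitions P R e n) = card (PE_partitions P R (\<lambda>x y. - e x y) (n + r_of P R e))"
    using card_image[OF inj_on_shift] assms by (simp add: Omega_def)
qed

theorem lambda_chain_condition_if_Omega_eq:
  assumes nonzero: "Omega P R e n \<noteq> 0"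
    and eq: "Omega P R (\<lambda>x y. - e x y) (n + r_of P R e) = Omega P R e n"
  shows "lambda_chain_condition P R e"
proof (rule ccontr)
  define r where "r = r_of P R e"
  assume "\<not> lambda_chain_condition P R e"
  then obtain x where x: "x \<in> P"
    and not_optimal: "\<And>xs. maximal_chain P R xs \<Longrightarrow> x \<in> set xs \<Longrightarrow> chain_sum e xs \<noteq> r"
    unfolding lambda_chain_condition_def r_def by auto
  have "PE_partitions P R e n \<noteq> {}"
    using nonzero unfolding Omega_def by (metis card.empty)
  then obtain \<sigma>\<^sub>0 where \<sigma>\<^sub>0: "\<sigma>\<^sub>0 \<in> PE_partitions P R e n"
    by blast
  have "raise (n + r) (shift \<sigma>\<^sub>0) \<in> PE_partitions P R (\<lambda>x y. - e x y) (n + r)"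
    unfolding r_def by (rule raise_in_PE_partitions[OF shift_in_PE_partitions[OF \<sigma>\<^sub>0]])
  then obtain \<sigma> where \<sigma>: "\<sigma> \<in> PE_partitions P R e n" "raise (n + r) (shift \<sigma>\<^sub>0) = shift \<sigma>"
    unfolding r_def shift_image_eq[OF eq, symmetric] by (rule imageE)
  obtain C where C: "C \<in> paths_from_min x" "chain_sum ascent C = weight_below ascent x"
    using weight_below_attained[OF x] by blast
  obtain D where D: "D \<in> paths_to_max x" "chain_sum e D = weight_above e x"
    using weight_above_attained[OF x] by blast
  have "chain_sum e (C @ tl D) \<le> r" "chain_sum e (C @ tl D) \<noteq> r"
    using chain_sum_le_r_of not_optimal maximal_chain_join[OF C(1) D(1)] unfolding r_def by blast+
  with shift_le_chain[OF \<sigma>(1) C(1) D] C(2) have "shift \<sigma> x + weight_below ascent x < n + r"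
    by simp
  moreover have "n + r \<le> raise (n + r) (shift \<sigma>\<^sub>0) x + weight_below ascent x"
    using x by (simp add: raise_def)
  ultimately show False using \<sigma>(2) by simp
qed

end

theorem lemma7p2:
  fixes P :: "'a set" and R :: "('a \<times> 'a) set" and \<omega> :: "'a \<Rightarrow> nat" and n :: nat
  assumes "finite P"
    and "partial_order_on P R"
    and "bij_betw \<omega> P {1..card P}"
    and "Omega P R (eps_of \<omega>) (int n) \<noteq> 0"
    and "Omega P R (\<lambda>x y. - eps_of \<omega> x y) (int n + r_of P R (eps_of \<omega>))
         = Omega P R (eps_of \<omega>) (int n)"
  shows "lambda_chain_condition P R (eps_of \<omega>)"
proof -
  interpret labeled_poset P R "eps_of \<omega>"
    using assms(1,2) by unfold_locales (auto simp: eps_of_def)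
  show ?thesis
    using assms(4,5) by (rule lambda_chain_condition_if_Omega_eq)
qed

end
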